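(* Let $L$ be a finite lattice and $C$ a nonempty convex subset of $L$. Then every maximal chain of $L$ that does not intersect $C$ contains an element that is neither below all maximal elements of $C$ nor above all minimal elements of $C$.
   Context: A subset $C$ of $L$ is convex if $x,y\in C$ implies $[x,y]\subseteq C$. A maximal chain is a totally ordered subset to which no element can be added while remaining a chain. *)

theory Defs
  imports Main
begin

definition convex_set :: "'a::order set \<Rightarrow> bool" where
  "convex_set C \<longleftrightarrow> (\<forall>x\<in>C. \<forall>y\<in>C. {x..y} \<subseteq> C)"

definition maximal_chain :: "'a::order set \<Rightarrow> bool" where
  "maximal_chain M \<longleftrightarrow> Complete_Partial_Order.chain (\<le>) M \<and>
     (\<forall>x. Complete_Partial_Order.chain (\<le>) (insert x M) \<longrightarrow> x \<in> M)"

definition maximal_elems :: "'a::order set \<Rightarrow> 'a set" where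
  "maximal_elems C = {x\<in>C. \<forall>y\<in>C. x \<le> y \<longrightarrow> y = x}"

definition minimal_elems :: "'a::order set \<Rightarrow> 'a set" where
  "minimal_elems C = {x\<in>C. \<forall>y\<in>C. y \<le> x \<longrightarrow> y = x}"

end

theory Submission
  imports Defs
begin

text \<open>Suppose every element of the maximal chain \<open>M\<close> lies below all maximal elements of \<open>C\<close>
  or above all minimal elements of \<open>C\<close>. Let \<open>D\<close> be the elements of \<open>M\<close> of the first kind, fix a
  minimal element \<open>c\<close> of \<open>C\<close> and put \<open>x = \<Squnion>(insert c D)\<close>. Then \<open>c \<le> x \<le> c'\<close> for a maximal
  element \<open>c' \<ge> c\<close> of \<open>C\<close>, so \<open>x \<in> C\<close> by convexity. Every element of \<open>M\<close> outside \<open>D\<close> is above \<open>c\<close>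
  and above every element of \<open>D\<close> (being below one would put it into \<open>D\<close>); hence \<open>x\<close> is
  comparable with all of \<open>M\<close>, and maximality puts \<open>x\<close> into \<open>M \<inter> C\<close>.\<close>

lemma maximal_chain_comparable:
  assumes "maximal_chain M" and "x \<in> M" and "y \<in> M"
  shows "x \<le> y \<or> y \<le> x"
  using assms unfolding maximal_chain_def Complete_Partial_Order.chain_def by blast

lemma maximal_chain_memI:
  assumes "maximal_chain M" and "\<And>m. m \<in> M \<Longrightarrow> m \<le> x \<or> x \<le> m"
  shows "x \<in> M"
proof -
  have "Complete_Partial_Order.chain (\<le>) (insert x M)"
    using assms maximal_chain_comparable unfolding Complete_Partial_Order.chain_def by blast
  then show ?thesis
    using assms(1) unfolding maximal_chain_def by blast
qed

lemma convex_setD: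
  assumes "convex_set C" and "x \<in> C" and "y \<in> C" and "x \<le> z" and "z \<le> y"
  shows "z \<in> C"
  using assms unfolding convex_set_def by (meson atLeastAtMost_iff subsetD)

lemma maximal_elems_above:
  assumes "finite C" and "c \<in> C"
  shows "\<exists>c'\<in>maximal_elems C. c \<le> c'"
  using finite_has_maximal2[OF assms] unfolding maximal_elems_def by force

lemma minimal_elems_nonempty:
  assumes "finite C" and "C \<noteq> {}"
  shows "minimal_elems C \<noteq> {}"
  using finite_has_minimal[OF assms] unfolding minimal_elems_def by force

lemma convex_set_Sup_fin_mem:
  fixes C D :: "'a::lattice set"
  assumes "finite C" and "convex_set C" and "c \<in> C" and "finite D"
    and "\<And>d c'. d \<in> D \<Longrightarrow> c' \<in> maximal_elems C \<Longrightarrow> d \<le> c'"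
  shows "Sup_fin (insert c D) \<in> C"
proof -
  obtain c' where "c' \<in> maximal_elems C" and "c \<le> c'"
    using maximal_elems_above[OF assms(1,3)] by blast
  then have "c' \<in> C" and "Sup_fin (insert c D) \<le> c'"
    using assms(4,5) unfolding maximal_elems_def by (auto intro: Sup_fin.boundedI)
  moreover have "c \<le> Sup_fin (insert c D)"
    using assms(4) by (simp add: Sup_fin.coboundedI)
  ultimately show ?thesis
    using convex_setD[OF assms(2,3)] by blast
qed

theorem lemma3p17:
  fixes C M :: "'a::{finite,lattice} set"
  assumes "C \<noteq> {}" and "convex_set C"
    and "maximal_chain M" and "M \<inter> C = {}"
  shows "\<exists>m\<in>M. \<not> (\<forall>c\<in>maximal_elems C. m \<le> c) \<and> \<not> (\<forall>c\<in>minimal_elems C. c \<le> m)"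
proof (rule ccontr)
  let ?below = "\<lambda>m. \<forall>c\<in>maximal_elems C. m \<le> c"
  define D where "D = {m \<in> M. ?below m}"
  assume "\<not> ?thesis"
  then have above: "c \<le> m" if "m \<in> M - D" and "c \<in> minimal_elems C" for m c
    using that unfolding D_def by blast
  obtain c where c: "c \<in> minimal_elems C"
    using minimal_elems_nonempty[OF finite assms(1)] by blast
  define x where "x = Sup_fin (insert c D)"
  have "x \<in> C"
    unfolding x_def using c assms(2) unfolding D_def minimal_elems_def
    by (intro convex_set_Sup_fin_mem) auto
  moreover have "m \<le> x \<or> x \<le> m" if "m \<in> M" for m
  proof (cases "m \<in> D")
    case True
    then show ?thesis unfolding x_def by (simp add: Sup_fin.coboundedI)
  next
    case False
    have "d \<le> m" if "d \<in> D" for d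
      using that False \<open>m \<in> M\<close> maximal_chain_comparable[OF assms(3)] order_trans
      unfolding D_def by blast
    moreover have "c \<le> m"
      using above[OF _ c] False \<open>m \<in> M\<close> by blast
    ultimately have "x \<le> m"
      unfolding x_def by (intro Sup_fin.boundedI) auto
    then show ?thesis ..
  qed
  ultimately show False
    using maximal_chain_memI[OF assms(3)] assms(4) by blast
qed

end
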